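(* Let $k\ge 2$ and let $G$ be a digraph. Let $G'$ be the digraph constructed as follows: for each vertex $u$ of $G$, $G'$ has $k+1$ vertices $u^-,u^+,u_1,\dots,u_{k-1}$; for each $u$, both $\{u^-,u_1,\dots,u_{k-1}\}$ and $\{u^+,u_1,\dots,u_{k-1}\}$ induce symmetric complete digraphs (every pair joined by a digon), and $u^-u^+$ is an arc; for every arc $uv$ of $G$, $u^+v^-$ is an arc of $G'$; there are no other arcs. Then $\Delta_{min}(G')\le k$, and $G$ is $k$-dicolourable if and only if $G'$ is $k$-dicolourable.
   Context: Digraphs have no loops and no parallel arcs, but may contain digons. A digraph is $k$-dicolourable if its vertices can be coloured with $k$ colours so that no directed cycle is monochromatic. $\Delta_{min}(G)=\max_{v}\min(d^+(v),d^-(v))$. *)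

theory Defs
  imports Main
begin

definition digraph :: "'a set \<Rightarrow> ('a \<times> 'a) set \<Rightarrow> bool" where
  "digraph V A \<longleftrightarrow> finite V \<and> A \<subseteq> V \<times> V \<and> (\<forall>v. (v, v) \<notin> A)"

definition is_dicycle :: "'a set \<Rightarrow> ('a \<times> 'a) set \<Rightarrow> 'a list \<Rightarrow> bool" where
  "is_dicycle V A vs \<longleftrightarrow> 2 \<le> length vs \<and> distinct vs \<and> set vs \<subseteq> V \<and>
     (\<forall>i < length vs. (vs ! i, vs ! ((i + 1) mod length vs)) \<in> A)"

definition dicolouring :: "'a set \<Rightarrow> ('a \<times> 'a) set \<Rightarrow> nat \<Rightarrow> ('a \<Rightarrow> nat) \<Rightarrow> bool" where
  "dicolouring V A k c \<longleftrightarrow> (\<forall>v\<in>V. c v < k) \<and>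
     (\<forall>vs. is_dicycle V A vs \<longrightarrow> \<not> (\<forall>x\<in>set vs. \<forall>y\<in>set vs. c x = c y))"

definition dicolourable :: "'a set \<Rightarrow> ('a \<times> 'a) set \<Rightarrow> nat \<Rightarrow> bool" where
  "dicolourable V A k \<longleftrightarrow> (\<exists>c. dicolouring V A k c)"

definition outdeg :: "'a set \<Rightarrow> ('a \<times> 'a) set \<Rightarrow> 'a \<Rightarrow> nat" where
  "outdeg V A v = card {w \<in> V. (v, w) \<in> A}"

definition indeg :: "'a set \<Rightarrow> ('a \<times> 'a) set \<Rightarrow> 'a \<Rightarrow> nat" where
  "indeg V A v = card {w \<in> V. (w, v) \<in> A}"

definition delta_min :: "'a set \<Rightarrow> ('a \<times> 'a) set \<Rightarrow> nat" where
  "delta_min V A = (if V = {} then 0 else Max ((\<lambda>v. min (outdeg V A v) (indeg V A v)) ` V))"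

text \<open>The construction G': vertex (u,0) is u^-, (u,k) is u^+, (u,i) for 1 \<le> i \<le> k-1 is u_i.\<close>
definition split_V :: "'a set \<Rightarrow> nat \<Rightarrow> ('a \<times> nat) set" where
  "split_V V k = V \<times> {0..k}"

definition split_A :: "'a set \<Rightarrow> ('a \<times> 'a) set \<Rightarrow> nat \<Rightarrow> (('a \<times> nat) \<times> ('a \<times> nat)) set" where
  "split_A V A k =
     {((u, i), (u, j)) | u i j. u \<in> V \<and> i \<noteq> j \<and>
        ((i < k \<and> j < k) \<or> (1 \<le> i \<and> i \<le> k \<and> 1 \<le> j \<and> j \<le> k))}
   \<union> {((u, 0), (u, k)) | u. u \<in> V}
   \<union> {((u, k), (v, 0)) | u v. (u, v) \<in> A}"

end

theory Submission
  imports Defs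
begin

text \<open>
  In a finite loopless digraph, a colour class contains a directed cycle iff it contains a
  nonempty set in which every vertex has an out-neighbour; so dicolourings can be handled
  through such successor-closed sets.

  Each gadget of \<open>G'\<close> consists of two symmetric complete digraphs of order \<open>k\<close> sharing
  \<open>u\<^sub>1, \<dots>, u\<^sub>k\<^sub>-\<^sub>1\<close>, so a \<open>k\<close>-dicolouring of \<open>G'\<close> gives \<open>u\<^sup>+\<close> the colour of \<open>u\<^sup>-\<close>; restricting
  it to the vertices \<open>u\<^sup>-\<close> dicolours \<open>G\<close>. Conversely, from a \<open>k\<close>-dicolouring \<open>c\<close> of \<open>G\<close>
  colour the \<open>j\<close>-th vertex of the gadget of \<open>u\<close> by \<open>(c u + j) mod k\<close>: the only monochromatic
  arcs are then \<open>u\<^sup>-u\<^sup>+\<close> and the arcs \<open>u\<^sup>+v\<^sup>-\<close> with \<open>c u = c v\<close>, so a monochromatic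
  cycle of \<open>G'\<close> projects to one of \<open>G\<close>. Finally \<open>u\<^sup>-\<close> has out-degree \<open>k\<close> and every other
  gadget vertex has in-degree \<open>k\<close>.
\<close>

definition succ_closed :: "('a \<times> 'a) set \<Rightarrow> 'a set \<Rightarrow> bool" where
  "succ_closed A S \<longleftrightarrow> (\<forall>x\<in>S. \<exists>y\<in>S. (x, y) \<in> A)"

definition monochromatic :: "('a \<Rightarrow> nat) \<Rightarrow> 'a set \<Rightarrow> bool" where
  "monochromatic c S \<longleftrightarrow> (\<forall>x\<in>S. \<forall>y\<in>S. c x = c y)"

definition symmetric_complete :: "('a \<times> 'a) set \<Rightarrow> 'a set \<Rightarrow> bool" where
  "symmetric_complete A K \<longleftrightarrow> (\<forall>x\<in>K. \<forall>y\<in>K. x \<noteq> y \<longrightarrow> (x, y) \<in> A)"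

lemma dicycle_of_walk:
  assumes walk: "\<And>n. (f n, f (Suc n)) \<in> A" and loopless: "\<And>v. (v, v) \<notin> A"
    and ij: "i < j" and closes: "f j = f i" and inj: "inj_on f {i..<j}"
    and V: "f ` {i..<j} \<subseteq> V"
  shows "is_dicycle V A (map f [i..<j])"
proof -
  let ?vs = "map f [i..<j]"
  have "j \<noteq> Suc i" using walk[of i] closes loopless by auto
  then have len: "2 \<le> length ?vs" using ij by simp
  have next_vertex: "?vs ! ((t + 1) mod length ?vs) = f (i + t + 1)" if "t < length ?vs" for t
  proof (cases "t + 1 < length ?vs")
    case True
    then show ?thesis by simp
  next
    case False
    then have "t + 1 = length ?vs" using that by simp
    moreover from this have "i + t + 1 = j" using ij by simp
    ultimately show ?thesis using closes by simp
  qed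
  show ?thesis
    unfolding is_dicycle_def
    using len inj V walk next_vertex by (auto simp: distinct_map)
qed

lemma first_repetition:
  fixes f :: "nat \<Rightarrow> 'a"
  assumes "finite S" and "\<And>n. f n \<in> S"
  obtains i j where "i < j" "f j = f i" "inj_on f {..<j}"
proof -
  have "\<not> inj_on f {..<Suc (card S)}"
  proof
    assume "inj_on f {..<Suc (card S)}"
    then have "card {..<Suc (card S)} \<le> card S"
      using card_inj_on_le assms by blast
    then show False by simp
  qed
  then have ex: "\<exists>n. \<not> inj_on f {..<n}" by blast
  define J where "J = (LEAST n. \<not> inj_on f {..<n})"
  have not_inj: "\<not> inj_on f {..<J}" unfolding J_def by (rule LeastI_ex[OF ex])
  then obtain m where m: "J = Suc m" by (cases J) auto
  have "inj_on f {..<m}"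
    using not_less_Least[of m "\<lambda>n. \<not> inj_on f {..<n}"] m unfolding J_def by simp
  moreover have "f m \<in> f ` {..<m}"
    using not_inj calculation by (simp add: m lessThan_Suc)
  ultimately show ?thesis using that by auto
qed

lemma succ_closed_dicycle:
  assumes "finite S" "S \<noteq> {}" "S \<subseteq> V" "succ_closed A S" and loopless: "\<And>v. (v, v) \<notin> A"
  shows "\<exists>vs. is_dicycle V A vs \<and> set vs \<subseteq> S"
proof -
  obtain g where g: "\<forall>x\<in>S. g x \<in> S \<and> (x, g x) \<in> A"
    using \<open>succ_closed A S\<close> unfolding succ_closed_def by metis
  obtain x0 where "x0 \<in> S" using \<open>S \<noteq> {}\<close> by blast
  define f where "f n = (g ^^ n) x0" for n
  have fS: "f n \<in> S" for n by (induction n) (simp_all add: f_def \<open>x0 \<in> S\<close> g)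
  have walk: "(f n, f (Suc n)) \<in> A" for n using g fS[of n] by (simp add: f_def)
  obtain i j where ij: "i < j" "f j = f i" "inj_on f {..<j}"
    using first_repetition[OF \<open>finite S\<close> fS] .
  have "inj_on f {i..<j}" using ij(3) by (rule inj_on_subset) auto
  moreover have "f ` {i..<j} \<subseteq> S" using fS by auto
  ultimately have "is_dicycle V A (map f [i..<j])"
    using dicycle_of_walk[OF walk loopless ij(1,2)] \<open>S \<subseteq> V\<close> by blast
  then show ?thesis using fS by (intro exI[of _ "map f [i..<j]"]) auto
qed

lemma dicycle_succ_closed:
  assumes "is_dicycle V A vs"
  shows "succ_closed A (set vs)"
  unfolding succ_closed_def
proof
  fix x assume "x \<in> set vs"
  then obtain t where t: "t < length vs" "vs ! t = x" by (auto simp: in_set_conv_nth)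
  then have "(x, vs ! ((t + 1) mod length vs)) \<in> A"
    using assms unfolding is_dicycle_def by auto
  moreover have "vs ! ((t + 1) mod length vs) \<in> set vs"
    using t(1) by (intro nth_mem mod_less_divisor) auto
  ultimately show "\<exists>y\<in>set vs. (x, y) \<in> A" by blast
qed

lemma dicolouring_iff_no_monochromatic_succ_closed:
  assumes "finite V" and loopless: "\<And>v. (v, v) \<notin> A"
  shows "dicolouring V A k c \<longleftrightarrow> (\<forall>v\<in>V. c v < k) \<and>
    (\<forall>S \<subseteq> V. S \<noteq> {} \<longrightarrow> succ_closed A S \<longrightarrow> \<not> monochromatic c S)"
proof -
  have "(\<exists>vs. is_dicycle V A vs \<and> monochromatic c (set vs)) \<longleftrightarrow>
        (\<exists>S \<subseteq> V. S \<noteq> {} \<and> succ_closed A S \<and> monochromatic c S)"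
  proof
    assume "\<exists>vs. is_dicycle V A vs \<and> monochromatic c (set vs)"
    then obtain vs where "is_dicycle V A vs" "monochromatic c (set vs)" by blast
    moreover from this have "set vs \<subseteq> V" "set vs \<noteq> {}"
      unfolding is_dicycle_def by auto
    ultimately show "\<exists>S \<subseteq> V. S \<noteq> {} \<and> succ_closed A S \<and> monochromatic c S"
      using dicycle_succ_closed by blast
  next
    assume "\<exists>S \<subseteq> V. S \<noteq> {} \<and> succ_closed A S \<and> monochromatic c S"
    then obtain S where S: "S \<subseteq> V" "S \<noteq> {}" "succ_closed A S" "monochromatic c S" by blast
    then obtain vs where "is_dicycle V A vs" "set vs \<subseteq> S"
      using succ_closed_dicycle[OF finite_subset[OF S(1) \<open>finite V\<close>] S(2,1,3) loopless] by blast
    with S(4) show "\<exists>vs. is_dicycle V A vs \<and> monochromatic c (set vs)"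
      unfolding monochromatic_def by blast
  qed
  then show ?thesis unfolding dicolouring_def monochromatic_def by blast
qed

lemma digraph_dicolouring_iff:
  assumes "digraph V A"
  shows "dicolouring V A k c \<longleftrightarrow> (\<forall>v\<in>V. c v < k) \<and>
    (\<forall>S \<subseteq> V. S \<noteq> {} \<longrightarrow> succ_closed A S \<longrightarrow> \<not> monochromatic c S)"
  using assms dicolouring_iff_no_monochromatic_succ_closed unfolding digraph_def by blast

lemma dicolouring_inj_on_symmetric_complete:
  assumes "dicolouring V A k c" "K \<subseteq> V" "symmetric_complete A K"
  shows "inj_on c K"
proof (rule inj_onI, rule ccontr)
  fix x y assume xy: "x \<in> K" "y \<in> K" "c x = c y" "x \<noteq> y"
  then have "is_dicycle V A [x, y]"
    using assms(2,3) unfolding is_dicycle_def symmetric_complete_def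
    by (auto simp: less_Suc_eq nth_Cons')
  then show False using assms(1) xy(3) unfolding dicolouring_def by force
qed

lemma digraph_split:
  assumes "digraph V A" "0 < k"
  shows "digraph (split_V V k) (split_A V A k)"
  using assms unfolding digraph_def split_V_def split_A_def by auto

lemma split_arc_minus_plus: "u \<in> V \<Longrightarrow> ((u, 0), (u, k)) \<in> split_A V A k"
  unfolding split_A_def by blast

lemma split_arc_plus_minus: "(u, v) \<in> A \<Longrightarrow> ((u, k), (v, 0)) \<in> split_A V A k"
  unfolding split_A_def by blast

lemma symmetric_complete_split:
  assumes "u \<in> V"
  shows "symmetric_complete (split_A V A k) ({u} \<times> {0..<k})"
    and "symmetric_complete (split_A V A k) ({u} \<times> {1..k})"
  using assms unfolding symmetric_complete_def split_A_def by auto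

lemma dicolouring_split_plus_eq_minus:
  assumes "dicolouring (split_V V k) (split_A V A k) k c" "u \<in> V"
  shows "c (u, k) = c (u, 0)"
proof -
  have colours: "c x < k" if "x \<in> split_V V k" for x
    using assms(1) that unfolding dicolouring_def by blast
  have inj_minus: "inj_on c ({u} \<times> {0..<k})"
    by (rule dicolouring_inj_on_symmetric_complete[OF assms(1) _ symmetric_complete_split(1)[OF assms(2)]])
      (use assms(2) in \<open>auto simp: split_V_def\<close>)
  have inj_plus: "inj_on c ({u} \<times> {1..k})"
    by (rule dicolouring_inj_on_symmetric_complete[OF assms(1) _ symmetric_complete_split(2)[OF assms(2)]])
      (use assms(2) in \<open>auto simp: split_V_def\<close>)
  have "c ` ({u} \<times> {0..<k}) \<subseteq> {0..<k}" using colours assms(2) by (auto simp: split_V_def)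
  moreover have "card (c ` ({u} \<times> {0..<k})) = card {0..<k}"
    using inj_minus by (simp add: card_image card_cartesian_product_singleton)
  ultimately have "c ` ({u} \<times> {0..<k}) = {0..<k}" by (simp add: card_subset_eq)
  moreover have "c (u, k) < k" using colours assms(2) by (simp add: split_V_def)
  ultimately obtain j where j: "j < k" "c (u, k) = c (u, j)" by force
  have "j = 0"
  proof (rule ccontr)
    assume "j \<noteq> 0"
    then have "(u, j) = (u, k)" using inj_onD[OF inj_plus j(2)[symmetric]] j(1) by simp
    with j(1) show False by simp
  qed
  with j show ?thesis by simp
qed

lemma distinct_congruent_le_modulus:
  fixes i j k :: nat
  assumes "i \<le> k" "j \<le> k" "i mod k = j mod k" "i \<noteq> j"
  shows "{i, j} = {0, k}"
proof -
  have "i = k \<or> j = k"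
  proof (rule ccontr)
    assume "\<not> (i = k \<or> j = k)"
    then have "i < k" "j < k" using assms(1,2) by auto
    then show False using assms(3,4) by simp
  qed
  then show ?thesis using assms by auto
qed

lemma shifted_colouring_monochromatic_arc:
  assumes "((x, i), (y, j)) \<in> split_A V A k" "(c x + i) mod k = (c y + j) mod k"
  shows "(x = y \<and> i = 0 \<and> j = k) \<or> (i = k \<and> j = 0 \<and> (x, y) \<in> A)"
proof -
  consider (gadget) "x = y" "i \<noteq> j" "(i < k \<and> j < k) \<or> (1 \<le> i \<and> i \<le> k \<and> 1 \<le> j \<and> j \<le> k)"
    | (minus_plus) "x = y" "i = 0" "j = k"
    | (plus_minus) "i = k" "j = 0" "(x, y) \<in> A"
    using assms(1) unfolding split_A_def by (simp; blast)
  then show ?thesis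
  proof cases
    case gadget
    have "i mod k = j mod k" using assms(2) gadget(1) by (simp add: nat_mod_eq_iff)
    then have "{i, j} = {0, k}" using distinct_congruent_le_modulus[of i k j] gadget(2,3) by linarith
    then have "(i = 0 \<and> j = k) \<or> (i = k \<and> j = 0)" by (simp add: doubleton_eq_iff)
    then show ?thesis using gadget(3) by auto
  qed simp_all
qed

lemma shifted_colouring_monochromatic_succ:
  assumes "succ_closed (split_A V A k) S" "monochromatic (\<lambda>(u, j). (c u + j) mod k) S"
    and "(u, i) \<in> S"
  shows "\<exists>v j. (v, j) \<in> S \<and> ((u = v \<and> i = 0 \<and> j = k) \<or> (i = k \<and> j = 0 \<and> (u, v) \<in> A))"
proof -
  obtain v j where vj: "(v, j) \<in> S" and arc: "((u, i), (v, j)) \<in> split_A V A k"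
    using assms(1,3) unfolding succ_closed_def by fast
  have "(\<lambda>(u, j). (c u + j) mod k) (u, i) = (\<lambda>(u, j). (c u + j) mod k) (v, j)"
    using assms(2,3) vj unfolding monochromatic_def by blast
  then have "(c u + i) mod k = (c v + j) mod k" by simp
  with vj show ?thesis using shifted_colouring_monochromatic_arc[OF arc] by blast
qed

lemma dicolouring_split_of_dicolouring:
  assumes G: "digraph V A" and k: "0 < k" and c: "dicolouring V A k c"
  shows "dicolouring (split_V V k) (split_A V A k) k (\<lambda>(u, j). (c u + j) mod k)"
    (is "dicolouring ?V ?A k ?c")
  unfolding digraph_dicolouring_iff[OF digraph_split[OF G k]]
proof (intro conjI ballI allI impI)
  show "?c x < k" for x using k by (simp add: case_prod_beta)
  fix S assume S: "S \<subseteq> ?V" "S \<noteq> {}" "succ_closed ?A S"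
  show "\<not> monochromatic ?c S"
  proof
    assume mono: "monochromatic ?c S"
    note step = shifted_colouring_monochromatic_succ[OF S(3) mono]
    define T where "T = {u. (u, 0) \<in> S}"
    have "T \<subseteq> V" using S(1) unfolding T_def split_V_def by auto
    moreover have "T \<noteq> {}"
    proof -
      obtain u i where ui: "(u, i) \<in> S" using S(2) by auto
      then obtain v j where "(v, j) \<in> S" "i = 0 \<or> j = 0" using step by blast
      then show ?thesis using ui unfolding T_def by blast
    qed
    moreover have "succ_closed A T"
      unfolding succ_closed_def
    proof
      fix u assume "u \<in> T"
      then obtain v j where "(v, j) \<in> S" "u = v \<and> j = k" using step[of u 0] k unfolding T_def by auto
      then have "(u, k) \<in> S" by simp
      then obtain v j where "(v, j) \<in> S" "j = 0 \<and> (u, v) \<in> A" using step[of u k] k by auto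
      then show "\<exists>v\<in>T. (u, v) \<in> A" unfolding T_def by auto
    qed
    moreover have "monochromatic c T"
      unfolding monochromatic_def
    proof (intro ballI)
      fix u v assume "u \<in> T" "v \<in> T"
      then have "(u, 0) \<in> S" "(v, 0) \<in> S" "u \<in> V" "v \<in> V"
        using \<open>T \<subseteq> V\<close> unfolding T_def by auto
      then have "?c (u, 0) = ?c (v, 0)" using mono unfolding monochromatic_def by blast
      moreover have "c u < k" "c v < k"
        using c \<open>u \<in> V\<close> \<open>v \<in> V\<close> unfolding dicolouring_def by auto
      ultimately show "c u = c v" by simp
    qed
    moreover have "\<forall>T \<subseteq> V. T \<noteq> {} \<longrightarrow> succ_closed A T \<longrightarrow> \<not> monochromatic c T"
      using c unfolding digraph_dicolouring_iff[OF G] by (rule conjunct2)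
    ultimately show False by blast
  qed
qed

lemma dicolouring_of_dicolouring_split:
  assumes G: "digraph V A" and k: "0 < k" and c: "dicolouring (split_V V k) (split_A V A k) k c"
  shows "dicolouring V A k (\<lambda>u. c (u, 0))"
  unfolding digraph_dicolouring_iff[OF G]
proof (intro conjI ballI allI impI)
  show "c (u, 0) < k" if "u \<in> V" for u
    using c that unfolding dicolouring_def split_V_def by auto
  fix T assume T: "T \<subseteq> V" "T \<noteq> {}" "succ_closed A T"
  show "\<not> monochromatic (\<lambda>u. c (u, 0)) T"
  proof
    assume mono: "monochromatic (\<lambda>u. c (u, 0)) T"
    define S where "S = T \<times> {0, k}"
    have "S \<subseteq> split_V V k" "S \<noteq> {}" using T(1,2) unfolding S_def split_V_def by auto
    moreover have "succ_closed (split_A V A k) S"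
      unfolding succ_closed_def
    proof
      fix x assume "x \<in> S"
      then obtain u j where x: "x = (u, j)" "u \<in> T" "j = 0 \<or> j = k" unfolding S_def by blast
      show "\<exists>y\<in>S. (x, y) \<in> split_A V A k"
      proof (cases "j = 0")
        case True
        have "u \<in> V" using x(2) T(1) by blast
        then have "(x, (u, k)) \<in> split_A V A k" unfolding x(1) True by (rule split_arc_minus_plus)
        moreover have "(u, k) \<in> S" using x(2) unfolding S_def by simp
        ultimately show ?thesis by blast
      next
        case False
        then have j: "j = k" using x(3) by simp
        obtain v where v: "v \<in> T" "(u, v) \<in> A" using T(3) x(2) unfolding succ_closed_def by blast
        from v(2) have "(x, (v, 0)) \<in> split_A V A k" unfolding x(1) j by (rule split_arc_plus_minus)
        moreover have "(v, 0) \<in> S" using v(1) unfolding S_def by simp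
        ultimately show ?thesis by blast
      qed
    qed
    moreover have "monochromatic c S"
      unfolding monochromatic_def
    proof (intro ballI)
      have plus_minus: "c x = c (fst x, 0)" if "x \<in> S" for x
        using that dicolouring_split_plus_eq_minus[OF c] T(1) unfolding S_def by auto
      fix x y assume "x \<in> S" "y \<in> S"
      then show "c x = c y"
        using plus_minus mono unfolding monochromatic_def S_def by (metis SigmaE fst_conv)
    qed
    ultimately show False
      using c unfolding digraph_dicolouring_iff[OF digraph_split[OF G k]] by blast
  qed
qed

lemma card_gadget_minus_vertex:
  "j \<le> k \<Longrightarrow> card ({u} \<times> ({0..k} - {j})) = k"
  by (simp add: card_cartesian_product_singleton)

lemma split_out_neighbours_minus:
  assumes "0 < k"
  shows "{w \<in> split_V V k. ((u, 0), w) \<in> split_A V A k} \<subseteq> {u} \<times> ({0..k} - {0})"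
  using assms unfolding split_A_def split_V_def by auto

lemma split_in_neighbours:
  assumes "0 < j"
  shows "{w \<in> split_V V k. (w, (u, j)) \<in> split_A V A k} \<subseteq> {u} \<times> ({0..k} - {j})"
  using assms unfolding split_A_def split_V_def by auto

lemma min_degree_split_le:
  assumes k: "0 < k" and x: "x \<in> split_V V k"
  shows "min (outdeg (split_V V k) (split_A V A k) x) (indeg (split_V V k) (split_A V A k) x) \<le> k"
proof -
  obtain u j where x: "x = (u, j)" "j \<le> k" using x unfolding split_V_def by auto
  have bound: "card N \<le> k" if "N \<subseteq> {u} \<times> ({0..k} - {i})" "i \<le> k" for N i
    using card_mono[OF _ that(1)] card_gadget_minus_vertex[OF that(2)] by simp
  show ?thesis
  proof (cases "j = 0")
    case True
    then have "outdeg (split_V V k) (split_A V A k) x \<le> k"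
      unfolding outdeg_def x using bound[OF split_out_neighbours_minus[OF k]] by simp
    then show ?thesis by simp
  next
    case False
    then have "indeg (split_V V k) (split_A V A k) x \<le> k"
      unfolding indeg_def x using bound[OF split_in_neighbours] x(2) by simp
    then show ?thesis by simp
  qed
qed

lemma delta_min_split_le:
  assumes "finite V" "0 < k"
  shows "delta_min (split_V V k) (split_A V A k) \<le> k"
proof -
  have "finite (split_V V k)" using assms(1) unfolding split_V_def by simp
  then show ?thesis
    unfolding delta_min_def by (simp add: Max_le_iff min_degree_split_le[OF assms(2)])
qed

theorem mainTheorem10:
  fixes V :: "'a set" and A :: "('a \<times> 'a) set" and k :: nat
  assumes "2 \<le> k" and "digraph V A"
  shows "delta_min (split_V V k) (split_A V A k) \<le> k \<and>
         (dicolourable V A k \<longleftrightarrow> dicolourable (split_V V k) (split_A V A k) k)"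
proof
  have k: "0 < k" using assms(1) by simp
  show "delta_min (split_V V k) (split_A V A k) \<le> k"
    using delta_min_split_le[OF _ k] assms(2) unfolding digraph_def by blast
  show "dicolourable V A k \<longleftrightarrow> dicolourable (split_V V k) (split_A V A k) k"
    unfolding dicolourable_def
    using dicolouring_split_of_dicolouring[OF assms(2) k]
      dicolouring_of_dicolouring_split[OF assms(2) k] by blast
qed

end
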